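(* Let $\theta>1$, $r\in(\theta^{-1},\theta^{-1/2}]$, $\rho\in(0,1]$, and $s=\frac1\rho\big(\frac{\ln\theta}{\ln(r\theta)}-2\big)$. Then \[ \max_{z\in[\frac1r,\ \frac1r+\rho(\theta-\frac1r)]}\frac{\Phi^\rho_r(z)^{s+1}}{z^{s}}\ \le\ r\theta. \]
   Context: Let $\varphi_r(z)=\frac{r\theta-1}{1-r}+\frac{1-r^2\theta}{1-r}\cdot\frac{z}{r\theta}$ (the line through $(r\theta,r\theta)$ and $(\theta,1/r)$). For $\rho\in(0,1]$ define $\Phi^\rho_r:[1,\theta]\to[1,\theta]$ by \[ \Phi^\rho_r(y)=\begin{cases} r\theta & y\in[1,r\theta)\\ \varphi_r(y) & y\in[r\theta,\tfrac1r)\\ \varphi_r(\tfrac1r)+\big(\tfrac1r-\varphi_r(\tfrac1r)\big)\dfrac{y-\tfrac1r}{\rho(\theta-\tfrac1r)} & y\in[\tfrac1r,\tfrac1r+\rho(\theta-\tfrac1r))\\ \tfrac1r & y\in[\tfrac1r+\rho(\theta-\tfrac1r),\theta].\end{cases} \] *)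

theory Defs
  imports Complex_Main
begin

text \<open>The line through (r*theta, r*theta) and (theta, 1/r).\<close>
definition varphi :: "real \<Rightarrow> real \<Rightarrow> real \<Rightarrow> real" where
  "varphi \<theta> r z = (r*\<theta> - 1)/(1 - r) + (1 - r^2*\<theta>)/(1 - r) * (z / (r*\<theta>))"

text \<open>The map Phi^rho_r on [1, theta] (values outside [1,theta] are irrelevant).\<close>
definition Phi :: "real \<Rightarrow> real \<Rightarrow> real \<Rightarrow> real \<Rightarrow> real" where
  "Phi \<theta> \<rho> r y =
     (if y < r*\<theta> then r*\<theta>
      else if y < 1/r then varphi \<theta> r y
      else if y < 1/r + \<rho>*(\<theta> - 1/r) then
        varphi \<theta> r (1/r) + (1/r - varphi \<theta> r (1/r)) * ((y - 1/r) / (\<rho>*(\<theta> - 1/r)))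
      else 1/r)"

end

theory Submission
  imports Defs "HOL-Analysis.Analysis"
begin

(* On the ramp [1/r, 1/r + rho (theta - 1/r)] the map Phi is affine, and (p, z) |-> p^(s+1) / z^s
   is jointly convex, being the perspective of u |-> u^(s+1); so the maximum is attained at an
   endpoint. Write x = r theta and 1/r = x^m, so that m >= 1 and s = (m - 1)/rho. At the right
   endpoint the bound reduces to Bernoulli's inequality x^rho <= 1 + rho (x - 1). At the left
   endpoint s + 1 >= m lets us lower the exponent to m, and after substituting x = q^m the bound
   reduces to (q^m - 1)^2 <= (q - 1) (q^(m m) - 1): an equality at m = 1 whose difference is
   nondecreasing in m by the tangent-line inequality for t |-> q^t. *)

lemma powr_tangent_le:
  fixes m x y :: real
  assumes "m \<ge> 1" "x > 0" "y > 0"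
  shows "m * x powr (m-1) * (y - x) \<le> y powr m - x powr m"
proof -
  have "(\<lambda>u. m * u powr (m-1)) x * (y - x) \<le> (\<lambda>u. u powr m) y - (\<lambda>u. u powr m) x"
  proof (rule f''_imp_f'[where C="{0<..}" and f'' = "\<lambda>u. m * ((m-1) * u powr (m-1-1))"])
    show "\<And>u. u \<in> {0<..} \<Longrightarrow> DERIV (\<lambda>u. u powr m) u :> m * u powr (m-1)"
      "\<And>u. u \<in> {0<..} \<Longrightarrow> DERIV (\<lambda>u. m * u powr (m-1)) u :> m * ((m-1) * u powr (m-1-1))"
      by (auto intro!: derivative_eq_intros)
  qed (use assms in auto)
  then show ?thesis by simp
qed

lemma powr_minus_one_squared_le:
  fixes q m :: real
  assumes q: "q > 1" and m: "m \<ge> 1"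
  shows "(q powr m - 1)^2 \<le> (q - 1) * (q powr (m*m) - 1)"
proof -
  define D where "D t = (q - 1) * (q powr (t*t) - 1) - (q powr t - 1)^2" for t
  have "D 1 \<le> D m"
  proof (rule DERIV_nonneg_imp_nondecreasing[OF m])
    fix t assume t: "1 \<le> t" "t \<le> m"
    have D': "DERIV D t :> 2 * ln q * ((q-1) * t * q powr (t*t) - (q powr t - 1) * q powr t)"
      unfolding D_def using q by (auto intro!: derivative_eq_intros simp: algebra_simps)
    have "q powr t - 1 \<le> t * q powr (t-1) * (q - 1)"
      using powr_tangent_le[of t q 1] q t by (simp add: algebra_simps)
    then have "(q powr t - 1) * q powr t \<le> t * q powr (t-1) * (q - 1) * q powr t"
      by (simp add: mult_right_mono)
    also have "\<dots> = (q-1) * t * q powr (2*t-1)"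
      by (simp add: powr_add[symmetric] algebra_simps)
    also have "\<dots> \<le> (q-1) * t * q powr (t*t)"
    proof -
      have "0 \<le> (t-1) * (t-1)" by simp
      then have "2*t - 1 \<le> t*t" by (simp add: algebra_simps)
      then show ?thesis using q t by (intro mult_left_mono powr_mono) auto
    qed
    finally show "\<exists>y. DERIV D t :> y \<and> y \<ge> 0"
      using D' q by (intro exI conjI) auto
  qed
  then show ?thesis unfolding D_def using q by (simp add: power2_eq_square)
qed

lemma one_plus_square_divide_le_root:
  fixes x m :: real
  assumes x: "x > 1" and m: "m \<ge> 1"
  shows "1 + (x - 1)^2 / (x powr m - 1) \<le> x powr (1/m)"
proof -
  define q where "q = x powr (1/m)"
  have q: "q > 1" "q powr m = x" "q powr (m*m) = x powr m"
    unfolding q_def using x m by (auto simp: powr_powr)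
  have "(x - 1)^2 \<le> (q - 1) * (x powr m - 1)"
    using powr_minus_one_squared_le[OF q(1) m] q by simp
  moreover have "x powr m > 1" using x m by simp
  ultimately have "(x - 1)^2 / (x powr m - 1) \<le> q - 1" by (simp add: divide_le_eq)
  then show ?thesis unfolding q_def by simp
qed

lemma ramp_start_ineq:
  fixes x m k :: real
  assumes x: "x > 1" and m: "m \<ge> 1" and k: "m \<le> k"
  shows "x powr m * ((1 + (x - 1)^2 / (x powr m - 1)) / x) powr k \<le> x"
proof -
  define w where "w = (1 + (x - 1)^2 / (x powr m - 1)) / x"
  have xm: "x \<le> x powr m" using powr_mono[of 1 m x] x m by simp
  have wx: "w * x = 1 + (x - 1)^2 / (x powr m - 1)" unfolding w_def using x by simp
  have "(x - 1) * (x - 1) \<le> (x - 1) * (x powr m - 1)"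
    using x xm by (intro mult_left_mono) auto
  then have "(x - 1)^2 / (x powr m - 1) \<le> x - 1"
    using x xm by (simp add: divide_le_eq power2_eq_square)
  moreover have "0 \<le> (x - 1)^2 / (x powr m - 1)" using x xm by simp
  ultimately have wx_bounds: "0 < w * x" "w * x \<le> x" using wx by simp_all
  then have w: "0 < w" "w \<le> 1" using x by (simp_all add: zero_less_mult_iff)
  have "(w * x) powr m \<le> (x powr (1/m)) powr m"
    using one_plus_square_divide_le_root[OF x m] wx_bounds(1) m
    unfolding wx[symmetric] by (intro powr_mono2) auto
  then have "x powr m * w powr m \<le> x" using x m w by (simp add: powr_mult powr_powr mult.commute)
  moreover have "w powr k \<le> w powr m" using w k by (intro powr_mono') auto
  ultimately show ?thesis unfolding w_def[symmetric]
    by (meson order.trans mult_left_mono powr_ge_zero)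
qed

lemma ramp_end_ineq:
  fixes x m \<rho> :: real
  assumes x: "x > 1" and m: "m \<ge> 1" and \<rho>: "0 < \<rho>" "\<rho> \<le> 1"
  shows "x powr m / (1 + \<rho> * (x - 1)) powr ((m - 1) / \<rho>) \<le> x"
proof -
  have "x powr \<rho> \<le> 1 + \<rho> * (x - 1)"
    using Youngs_inequality_0[of \<rho> "1 - \<rho>" x 1] x \<rho> by (simp add: algebra_simps)
  then have "(x powr \<rho>) powr ((m - 1) / \<rho>) \<le> (1 + \<rho> * (x - 1)) powr ((m - 1) / \<rho>)"
    using x m \<rho> by (intro powr_mono2) auto
  then have "x powr (m - 1) \<le> (1 + \<rho> * (x - 1)) powr ((m - 1) / \<rho>)"
    using \<rho> by (simp add: powr_powr)
  moreover have "x powr m = x * x powr (m - 1)"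
    using x by (simp add: powr_diff)
  ultimately show ?thesis
    using x by (simp add: divide_le_eq)
qed

lemma powr_plus_one_divide_powr:
  fixes p z s :: real
  assumes "0 < p" "0 < z"
  shows "p powr (s + 1) / z powr s = z * (p / z) powr (s + 1)"
  using assms by (simp add: powr_divide powr_add field_simps)

lemma convex_powr_perspective:
  fixes s t p\<^sub>1 p\<^sub>2 z\<^sub>1 z\<^sub>2 :: real
  assumes s: "0 \<le> s" and t: "0 \<le> t" "t \<le> 1"
    and p: "0 < p\<^sub>1" "0 < p\<^sub>2" and z: "0 < z\<^sub>1" "0 < z\<^sub>2"
  shows "((1-t) * p\<^sub>1 + t * p\<^sub>2) powr (s+1) / ((1-t) * z\<^sub>1 + t * z\<^sub>2) powr s
    \<le> (1-t) * (p\<^sub>1 powr (s+1) / z\<^sub>1 powr s) + t * (p\<^sub>2 powr (s+1) / z\<^sub>2 powr s)"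
proof -
  define P Z where "P = (1-t) * p\<^sub>1 + t * p\<^sub>2" and "Z = (1-t) * z\<^sub>1 + t * z\<^sub>2"
  have PZ: "0 < P" "0 < Z"
    unfolding P_def Z_def using t p z by (cases "t = 1"; auto intro!: add_pos_nonneg)+
  define \<mu> where "\<mu> = t * z\<^sub>2 / Z"
  have \<mu>: "0 \<le> \<mu>" "\<mu> \<le> 1" "1 - \<mu> = (1-t) * z\<^sub>1 / Z"
    unfolding \<mu>_def using t z PZ by (auto simp: Z_def field_simps)
  have "P / Z = (1 - \<mu>) * (p\<^sub>1 / z\<^sub>1) + \<mu> * (p\<^sub>2 / z\<^sub>2)"
    unfolding \<mu>(3) unfolding \<mu>_def P_def using z PZ by (simp add: field_simps)
  then have "(P / Z) powr (s+1) \<le> (1 - \<mu>) * (p\<^sub>1 / z\<^sub>1) powr (s+1) + \<mu> * (p\<^sub>2 / z\<^sub>2) powr (s+1)"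
    using convex_onD[OF powr_convex, of "s+1" \<mu> "p\<^sub>1 / z\<^sub>1" "p\<^sub>2 / z\<^sub>2"] s \<mu> p z by simp
  then have "Z * (P / Z) powr (s+1)
      \<le> Z * ((1 - \<mu>) * (p\<^sub>1 / z\<^sub>1) powr (s+1) + \<mu> * (p\<^sub>2 / z\<^sub>2) powr (s+1))"
    using PZ by (intro mult_left_mono) auto
  also have "\<dots> = (Z * (1 - \<mu>)) * (p\<^sub>1 / z\<^sub>1) powr (s+1) + (Z * \<mu>) * (p\<^sub>2 / z\<^sub>2) powr (s+1)"
    by (simp add: algebra_simps)
  also have "\<dots> = (1-t) * (z\<^sub>1 * (p\<^sub>1 / z\<^sub>1) powr (s+1)) + t * (z\<^sub>2 * (p\<^sub>2 / z\<^sub>2) powr (s+1))"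
    unfolding \<mu>(3) unfolding \<mu>_def using PZ by simp
  finally show ?thesis
    unfolding P_def[symmetric] Z_def[symmetric] using PZ p z by (simp add: powr_plus_one_divide_powr)
qed

lemma powr_ln_ratio_minus_one:
  fixes x \<theta> :: real
  assumes "x > 1" "\<theta> > 0"
  shows "x powr (ln \<theta> / ln x - 1) = \<theta> / x"
  using assms by (simp add: powr_def left_diff_distrib exp_diff)

lemma ln_ratio_minus_one_ge_one:
  fixes x \<theta> :: real
  assumes "x > 1" "x^2 \<le> \<theta>"
  shows "1 \<le> ln \<theta> / ln x - 1"
proof -
  have "0 < x^2" using assms by simp
  then have "0 < \<theta>" using assms by linarith
  then have "ln (x^2) \<le> ln \<theta>" using assms(2) \<open>0 < x^2\<close> by (simp only: ln_le_cancel_iff)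
  then have "2 * ln x \<le> ln \<theta>" using assms by (simp add: ln_realpow)
  then show ?thesis using assms by (simp add: field_simps)
qed

lemma r_bounds:
  fixes \<theta> r :: real
  assumes "\<theta> > 1" "1/\<theta> < r" "r \<le> \<theta> powr (-1/2)"
  shows "0 < r" "r < 1" "1/r < \<theta>" "1 < r*\<theta>" "r^2 * \<theta> \<le> 1"
proof -
  show r: "0 < r" using assms by (smt (verit) divide_pos_pos)
  show "1/r < \<theta>" "1 < r*\<theta>" using assms r by (simp_all add: field_simps)
  have "r^2 \<le> (\<theta> powr (-1/2))^2" using assms r by (intro power_mono) auto
  also have "\<dots> = \<theta> powr (-1)" by (simp add: power2_eq_square flip: powr_add)
  also have "\<dots> = 1/\<theta>" using assms by (simp add: powr_minus_divide)
  finally show r2: "r^2 * \<theta> \<le> 1" using assms by (simp add: field_simps)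
  have "r^2 < r^2 * \<theta>" using assms r by simp
  then show "r < 1" using r r2 by (smt (verit) one_le_power)
qed

lemma r_times_varphi_inverse:
  fixes \<theta> r :: real
  assumes "0 < r" "r < 1" "0 < \<theta>"
  shows "r * varphi \<theta> r (1/r) = (1 + (r*\<theta> - 1)^2 / (1/r - 1)) / (r*\<theta>)"
proof -
  define x where "x = r*\<theta>"
  have nz: "x \<noteq> 0" "r \<noteq> 0" "1 - r \<noteq> 0" unfolding x_def using assms by auto
  have "r^2 * \<theta> = r * x" unfolding x_def by (simp add: power2_eq_square)
  then have "varphi \<theta> r (1/r) = (x-1)/(1-r) + (1 - r*x)/(1-r) * ((1/r)/x)"
    unfolding varphi_def x_def[symmetric] by simp
  then have "r * varphi \<theta> r (1/r) * x = (r*x*(x-1) + (1 - r*x)) / (1-r)"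
    using nz by (simp add: divide_simps) (simp add: algebra_simps)
  also have "\<dots> = 1 + (x-1)^2 / (1/r - 1)"
    using nz by (simp add: divide_simps) (simp add: algebra_simps power2_eq_square)
  finally show ?thesis unfolding x_def[symmetric] using nz by (simp add: eq_divide_eq)
qed

lemma Phi_on_ramp:
  fixes \<theta> \<rho> r t :: real
  assumes r: "0 < r" "r^2 * \<theta> \<le> 1" "1/r < \<theta>" and \<rho>: "0 < \<rho>" and t: "0 \<le> t" "t \<le> 1"
  shows "Phi \<theta> \<rho> r ((1-t) * (1/r) + t * (1/r + \<rho>*(\<theta> - 1/r)))
    = (1-t) * varphi \<theta> r (1/r) + t * (1/r)"
proof -
  define \<delta> z where "\<delta> = \<rho>*(\<theta> - 1/r)" and "z = (1-t) * (1/r) + t * (1/r + \<delta>)"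
  have d: "0 < \<delta>" using r \<rho> by (simp add: \<delta>_def)
  have zt: "z - 1/r = t * \<delta>" unfolding z_def by (simp add: diff_divide_distrib distrib_left)
  then have "1/r \<le> z" using t d by (metis diff_ge_0_iff_ge mult_nonneg_nonneg less_imp_le)
  moreover have "r*\<theta> \<le> 1/r" using r by (simp add: field_simps power2_eq_square)
  ultimately have z: "\<not> z < r*\<theta>" "\<not> z < 1/r" "(z - 1/r) / \<delta> = t"
    using zt d by auto
  show ?thesis
  proof (cases "t = 1")
    case True
    then show ?thesis using z unfolding Phi_def \<delta>_def[symmetric] z_def[symmetric]
      by (simp add: z_def add_divide_distrib[symmetric])
  next
    case False
    then have "t * \<delta> < 1 * \<delta>" using t d by (intro mult_strict_right_mono) auto
    then have "z < 1/r + \<delta>" using zt by simp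
    then show ?thesis using z unfolding Phi_def \<delta>_def[symmetric] z_def[symmetric] by (simp add: algebra_simps)
  qed
qed

lemma ramp_start_value_le:
  fixes \<theta> r m s :: real
  assumes r: "0 < r" "r < 1" "1 < r*\<theta>" and m: "1 \<le> m" "(r*\<theta>) powr m = 1/r" and s: "m \<le> s + 1"
  shows "0 < varphi \<theta> r (1/r)" "varphi \<theta> r (1/r) powr (s+1) / (1/r) powr s \<le> r*\<theta>"
proof -
  define x u where "x = r*\<theta>" and "u = varphi \<theta> r (1/r)"
  have x: "1 < x" "x powr m = 1/r" using r m by (simp_all add: x_def)
  have "0 < r * \<theta>" using r by linarith
  then have "0 < \<theta>" using r(1) by (simp add: zero_less_mult_iff)
  have ru: "r * u = (1 + (x - 1)^2 / (x powr m - 1)) / x"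
    unfolding u_def x(2) unfolding x_def using r \<open>0 < \<theta>\<close> by (intro r_times_varphi_inverse) auto
  have "1 < x powr m" unfolding x(2) using r(1,2) by (simp add: field_simps)
  then have "0 < r * u" unfolding ru using x by (simp add: add_pos_nonneg)
  then show u: "0 < varphi \<theta> r (1/r)" using r unfolding u_def by (simp add: zero_less_mult_iff)
  have "u powr (s+1) / (1/r) powr s = x powr m * (r * u) powr (s+1)"
    using u r x by (simp add: u_def powr_plus_one_divide_powr mult.commute)
  also have "\<dots> \<le> x" unfolding ru using ramp_start_ineq[OF x(1) m(1) s] .
  finally show "varphi \<theta> r (1/r) powr (s+1) / (1/r) powr s \<le> r*\<theta>" unfolding u_def x_def .
qed

lemma ramp_end_value_le:
  fixes \<theta> r m \<rho> :: real
  assumes r: "0 < r" "1 < r*\<theta>" and m: "1 \<le> m" "(r*\<theta>) powr m = 1/r" and \<rho>: "0 < \<rho>" "\<rho> \<le> 1"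
  shows "(1/r) powr ((m - 1) / \<rho> + 1) / (1/r + \<rho>*(\<theta> - 1/r)) powr ((m - 1) / \<rho>) \<le> r*\<theta>"
proof -
  define x zR where "x = r*\<theta>" and "zR = 1/r + \<rho>*(\<theta> - 1/r)"
  have "r * zR = 1 + \<rho> * (x - 1)" unfolding zR_def x_def using r by (simp add: field_simps)
  moreover have "0 < 1 + \<rho> * (x - 1)" using r \<rho> by (simp add: x_def add_pos_nonneg)
  ultimately have "0 < zR" using r(1) by (metis zero_less_mult_pos)
  have "(1/r) powr ((m - 1) / \<rho> + 1) / zR powr ((m - 1) / \<rho>) = (1/r) / (r * zR) powr ((m - 1) / \<rho>)"
    using r(1) \<open>0 < zR\<close> by (simp add: powr_add powr_mult powr_divide)
  also have "\<dots> = x powr m / (1 + \<rho> * (x - 1)) powr ((m - 1) / \<rho>)"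
    using \<open>r * zR = _\<close> m(2) by (simp add: x_def)
  also have "\<dots> \<le> x" using ramp_end_ineq[OF _ m(1) \<rho>] r by (simp add: x_def)
  finally show ?thesis unfolding zR_def x_def .
qed

theorem corollary4:
  fixes \<theta> r \<rho> s :: real
  assumes "\<theta> > 1"
    and "1/\<theta> < r" and "r \<le> \<theta> powr (-1/2)"
    and "0 < \<rho>" and "\<rho> \<le> 1"
    and "s = (1/\<rho>) * (ln \<theta> / ln (r*\<theta>) - 2)"
  shows "\<forall>z \<in> {1/r .. 1/r + \<rho>*(\<theta> - 1/r)}.
           Phi \<theta> \<rho> r z powr (s+1) / z powr s \<le> r*\<theta>"
proof
  fix z assume z: "z \<in> {1/r .. 1/r + \<rho>*(\<theta> - 1/r)}"
  note \<rho> = assms(4,5)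
  note r = r_bounds[OF assms(1-3)]
  define m where "m = ln \<theta> / ln (r*\<theta>) - 1"
  have m: "1 \<le> m" "(r*\<theta>) powr m = 1/r"
    using ln_ratio_minus_one_ge_one[of "r*\<theta>" \<theta>] powr_ln_ratio_minus_one[of "r*\<theta>" \<theta>] r assms(1)
    by (simp_all add: m_def power2_eq_square)
  have "s = (m - 1) / \<rho>" using assms(6) by (simp add: m_def)
  moreover have "m - 1 \<le> (m - 1) / \<rho>" using m(1) \<rho> by (simp add: le_divide_eq mult_left_le)
  ultimately have s: "s = (m - 1) / \<rho>" "0 \<le> s" "m \<le> s + 1" using m(1) \<rho> by simp_all
  define zR where "zR = 1/r + \<rho>*(\<theta> - 1/r)"
  have "z \<in> closed_segment (1/r) zR" using z by (simp add: closed_segment_eq_real_ivl1 zR_def)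
  then obtain t where t: "0 \<le> t" "t \<le> 1" "z = (1-t) * (1/r) + t * zR" by (auto simp: in_segment)
  have "0 < zR" using r \<rho> by (simp add: zR_def add_pos_pos)
  have Phi_z: "Phi \<theta> \<rho> r z = (1-t) * varphi \<theta> r (1/r) + t * (1/r)"
    unfolding t(3) zR_def using Phi_on_ramp[OF r(1,5,3) \<rho>(1) t(1,2)] .
  have "Phi \<theta> \<rho> r z powr (s+1) / z powr s
      \<le> (1-t) * (varphi \<theta> r (1/r) powr (s+1) / (1/r) powr s) + t * ((1/r) powr (s+1) / zR powr s)"
    unfolding Phi_z unfolding t(3)
    by (rule convex_powr_perspective) (use s t r \<open>0 < zR\<close> ramp_start_value_le(1)[OF r(1,2,4) m s(3)] in auto)
  also have "\<dots> \<le> (1-t) * (r*\<theta>) + t * (r*\<theta>)"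
    using ramp_start_value_le(2)[OF r(1,2,4) m s(3)] ramp_end_value_le[OF r(1,4) m \<rho>] t
    unfolding s(1) zR_def by (intro add_mono mult_left_mono) auto
  finally show "Phi \<theta> \<rho> r z powr (s+1) / z powr s \<le> r*\<theta>" by (simp add: algebra_simps)
qed

end
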